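(* Consider the infinite grid graph $G=P\times P$, where $P$ is the infinite path with vertex set $\mathbb{Z}$ and edges $\{i,i+1\}$, and let $d(u,v)$ denote the length of a shortest path between nodes $u,v$ of $G$. Let $M$ be a finite nonempty set of nodes (the meeting nodes). For a configuration at time $t$, let $\lambda_t(v)\in\mathbb{N}$ be the number of robots at node $v$ (finitely many robots in total), let $c_t(m)=\sum_{v} d(v,m)\,\lambda_t(v)$, and let $W(t)=\{m\in M : c_t(m)=\min_{m'\in M}c_t(m')\}$ be the set of Weber nodes at time $t$. Let $m\in W(t)$. Suppose the configuration at time $t'$ is obtained from that at time $t$ by moving either a single robot, or $j\ge 2$ robots located together on the same node, from a node $a$ to an adjacent node $b$ with $d(b,m)=d(a,m)-1$ (i.e. along a shortest path towards $m$). Then (1) $m\in W(t')$, and (2) $W(t')\subseteq W(t)$.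
   Context: Robots are located on nodes of the grid; several robots may occupy the same node (a multiplicity). The consistency $c_t(m)$ is the sum of the distances of all robots from $m$, counted with multiplicity. *)

theory Defs
  imports Main
begin

type_synonym node = "int \<times> int"

definition grid_adj :: "node \<Rightarrow> node \<Rightarrow> bool" where
  "grid_adj u v \<longleftrightarrow>
     (snd u = snd v \<and> \<bar>fst u - fst v\<bar> = 1) \<or> (fst u = fst v \<and> \<bar>snd u - snd v\<bar> = 1)"

inductive walk :: "node \<Rightarrow> node \<Rightarrow> nat \<Rightarrow> bool" where
  walk_refl: "walk u u 0"
| walk_step: "grid_adj u w \<Longrightarrow> walk w v n \<Longrightarrow> walk u v (Suc n)"

definition gdist :: "node \<Rightarrow> node \<Rightarrow> nat" where
  "gdist u v = (LEAST n. walk u v n)"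

definition finite_config :: "(node \<Rightarrow> nat) \<Rightarrow> bool" where
  "finite_config lam \<longleftrightarrow> finite {v. lam v \<noteq> 0}"

definition consistency :: "(node \<Rightarrow> nat) \<Rightarrow> node \<Rightarrow> nat" where
  "consistency lam m = (\<Sum>v\<in>{v. lam v \<noteq> 0}. gdist v m * lam v)"

definition weber :: "(node \<Rightarrow> nat) \<Rightarrow> node set \<Rightarrow> node set" where
  "weber lam M = {m \<in> M. consistency lam m = Min (consistency lam ` M)}"

end

theory Submission
  imports Defs
begin

text \<open>Moving \<open>j\<close> robots from \<open>a\<close> to a neighbour \<open>b\<close> changes the consistency of every
  node \<open>x\<close> by \<open>j * (d(b,x) - d(a,x))\<close>, which is at least \<open>-j\<close> because \<open>a\<close> and \<open>b\<close> are
  adjacent. At \<open>m\<close> the change is exactly \<open>-j\<close>, the largest possible decrease, so \<open>m\<close> stays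
  a minimiser, and every new minimiser \<open>x\<close> satisfies \<open>c\<^sub>t(x) \<le> c\<^sub>t'(x) + j \<le> c\<^sub>t'(m) + j = c\<^sub>t(m)\<close>,
  hence was already a minimiser.\<close>

lemma grid_adj_sym: "grid_adj u v \<Longrightarrow> grid_adj v u"
  by (auto simp: grid_adj_def)

lemma walk_trans: "walk u w n \<Longrightarrow> walk w v k \<Longrightarrow> walk u v (n + k)"
  by (induction rule: walk.induct) (auto intro: walk.intros)

lemma walk_snoc: "walk u v n \<Longrightarrow> grid_adj v w \<Longrightarrow> walk u w (Suc n)"
  using walk_trans[of u v n w 1] by (simp add: walk.intros)

lemma walk_sym: "walk u v n \<Longrightarrow> walk v u n"
  by (induction rule: walk.induct) (auto intro: walk_refl walk_snoc grid_adj_sym)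

lemma walk_along_line:
  fixes p :: "int \<Rightarrow> node"
  assumes "\<And>i. grid_adj (p i) (p (i + 1))"
  shows "walk (p i) (p (i + int n)) n"
proof (induction n arbitrary: i)
  case 0
  show ?case by (simp add: walk_refl)
next
  case (Suc n)
  have "walk (p i) (p (i + 1 + int n)) (Suc n)"
    using assms Suc.IH[of "i + 1"] by (rule walk_step)
  then show ?case by (simp add: add.assoc)
qed

lemma walk_between_on_line:
  fixes p :: "int \<Rightarrow> node"
  assumes "\<And>i. grid_adj (p i) (p (i + 1))"
  shows "\<exists>n. walk (p i) (p k) n"
proof (cases "i \<le> k")
  case True
  then show ?thesis using walk_along_line[of p, OF assms, of i "nat (k - i)"] by auto
next
  case False
  then show ?thesis using walk_sym[OF walk_along_line[of p, OF assms, of k "nat (i - k)"]] by auto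
qed

lemma walk_exists: "\<exists>n. walk u v n"
proof -
  obtain x y x' y' where u: "u = (x, y)" and v: "v = (x', y')" by fastforce
  obtain n where "walk (x, y) (x', y) n"
    using walk_between_on_line[of "\<lambda>i. (i, y)"] by (auto simp: grid_adj_def)
  moreover obtain k where "walk (x', y) (x', y') k"
    using walk_between_on_line[of "\<lambda>i. (x', i)"] by (auto simp: grid_adj_def)
  ultimately show ?thesis using walk_trans u v by blast
qed

lemma walk_gdist: "walk u v (gdist u v)"
  unfolding gdist_def using walk_exists by (rule LeastI_ex)

lemma gdist_le_walk: "walk u v n \<Longrightarrow> gdist u v \<le> n"
  unfolding gdist_def by (rule Least_le)

lemma gdist_adj_le: "grid_adj a b \<Longrightarrow> gdist a x \<le> gdist b x + 1"
  using walk_step[OF _ walk_gdist] gdist_le_walk by fastforce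

lemma consistency_eq_sum_superset:
  assumes "finite S" "{v. lam v \<noteq> 0} \<subseteq> S"
  shows "consistency lam x = (\<Sum>v\<in>S. gdist v x * lam v)"
  unfolding consistency_def by (rule sum.mono_neutral_left) (use assms in auto)

text \<open>Stated with both sides moved so that no subtraction on \<open>nat\<close> occurs.\<close>
lemma consistency_move:
  assumes "finite_config lam" "a \<noteq> b" "j \<le> lam a"
  shows "consistency (lam(a := lam a - j, b := lam b + j)) x + j * gdist a x
         = consistency lam x + j * gdist b x"
proof -
  let ?lam' = "lam(a := lam a - j, b := lam b + j)"
  define S where "S = insert a (insert b {v. lam v \<noteq> 0})"
  have S: "finite S" "a \<in> S" "b \<in> S"
    using assms(1) by (auto simp: S_def finite_config_def)
  have support: "{v. lam v \<noteq> 0} \<subseteq> S" "{v. ?lam' v \<noteq> 0} \<subseteq> S"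
    by (auto simp: S_def)
  have pointwise: "gdist v x * ?lam' v + (if v = a then j * gdist v x else 0)
                 = gdist v x * lam v + (if v = b then j * gdist v x else 0)" for v
    using assms(2,3) by (auto simp: algebra_simps diff_mult_distrib2)
  have "consistency ?lam' x + j * gdist a x
        = (\<Sum>v\<in>S. gdist v x * ?lam' v + (if v = a then j * gdist v x else 0))"
    using S by (simp add: sum.distrib consistency_eq_sum_superset[OF S(1) support(2)])
  also have "\<dots> = (\<Sum>v\<in>S. gdist v x * lam v + (if v = b then j * gdist v x else 0))"
    by (simp only: pointwise)
  also have "\<dots> = consistency lam x + j * gdist b x"
    using S by (simp add: sum.distrib consistency_eq_sum_superset[OF S(1) support(1)])
  finally show ?thesis .
qed

lemma weber_iff:
  assumes "finite M"
  shows "m \<in> weber lam M \<longleftrightarrow> m \<in> M \<and> (\<forall>x\<in>M. consistency lam m \<le> consistency lam x)"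
proof (cases "m \<in> M")
  case True
  then have "consistency lam ` M \<noteq> {}" by blast
  with assms show ?thesis
    by (auto simp: weber_def eq_commute[of "consistency lam m"] Min_eq_iff)
qed (simp add: weber_def)

theorem lemma1:
  fixes M :: "node set" and lam lam' :: "node \<Rightarrow> nat" and m a b :: node and j :: nat
  assumes "finite M" and "M \<noteq> {}"
    and "finite_config lam"
    and "m \<in> weber lam M"
    and "grid_adj a b"
    and "gdist b m + 1 = gdist a m"
    and "1 \<le> j" and "j \<le> lam a"
    and "lam' = lam(a := lam a - j, b := lam b + j)"
  shows "m \<in> weber lam' M \<and> weber lam' M \<subseteq> weber lam M"
proof -
  have "a \<noteq> b" using assms(5) by (auto simp: grid_adj_def)
  then have move: "consistency lam' x + j * gdist a x = consistency lam x + j * gdist b x" for x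
    using consistency_move assms(3,8,9) by blast
  have drop_at_m: "consistency lam' m + j = consistency lam m"
    using move[of m] by (simp flip: assms(6) add: algebra_simps)
  have drop_le: "consistency lam x \<le> consistency lam' x + j" for x
    using move[of x] mult_le_mono2[OF gdist_adj_le[OF assms(5), of x], of j] by simp
  have m_min: "m \<in> M" "\<forall>x\<in>M. consistency lam m \<le> consistency lam x"
    using assms(4) weber_iff[OF assms(1)] by auto
  have "\<forall>x\<in>M. consistency lam' m \<le> consistency lam' x"
    using m_min(2) drop_at_m drop_le by (metis add_le_cancel_right order_trans)
  then have "m \<in> weber lam' M"
    using m_min(1) weber_iff[OF assms(1)] by blast
  moreover have "weber lam' M \<subseteq> weber lam M"
  proof
    fix x assume "x \<in> weber lam' M"
    then have "x \<in> M" "consistency lam' x \<le> consistency lam' m"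
      using m_min by (auto simp: weber_iff[OF assms(1)])
    then have "\<forall>y\<in>M. consistency lam x \<le> consistency lam y"
      using drop_le[of x] drop_at_m m_min(2) by (metis add_le_cancel_right order_trans)
    then show "x \<in> weber lam M"
      using \<open>x \<in> M\<close> weber_iff[OF assms(1)] by blast
  qed
  ultimately show ?thesis by blast
qed

end
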